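(* Let $\alpha\in(0,2]$. For integers $n_1,n_2\ge 1$, with $n=n_1+n_2$, define $$f_{\{n_1\}\{n_2\}}=\max_{|\phi_a\rangle,|\phi_b\rangle}\ \operatorname{Tr}\Big[\big(\alpha\mathcal{M}^{(n)}_Z+\mathcal{M}^{(n)}_X\big)\,|\phi_a\rangle\langle\phi_a|\otimes|\phi_b\rangle\langle\phi_b|\Big],$$ where the maximum is over unit vectors $|\phi_a\rangle\in(\mathbb{C}^2)^{\otimes n_1}$ and $|\phi_b\rangle\in(\mathbb{C}^2)^{\otimes n_2}$, and $\mathcal{M}^{(n)}_Z=(|0\rangle\langle 0|)^{\otimes n}+(|1\rangle\langle 1|)^{\otimes n}$, $\mathcal{M}^{(n)}_X=\sigma_x^{\otimes n}$ with $\sigma_x=|0\rangle\langle 1|+|1\rangle\langle 0|$. Then for all $n_1,n_2\ge 1$, $$f_{\{n_1\}\{n_2\}}=f_{\{n_1\}\{1\}}.$$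
   Context: $\{|0\rangle,|1\rangle\}$ is the computational basis of $\mathbb{C}^2$; $f_{\{n_1\}\{1\}}$ is the same quantity defined with $n_2=1$ (so on $n_1+1$ qubits). *)

theory Defs
  imports Complex_Main
begin

text \<open>n-qubit space (C^2)^{\<otimes>n}: computational basis indexed by bit strings
 (bool lists of length n; False = |0>, True = |1>).\<close>

definition bitstrings :: "nat \<Rightarrow> bool list set" where
  "bitstrings n = {xs. length xs = n}"

type_synonym qvec = "bool list \<Rightarrow> complex"
type_synonym qop = "bool list \<Rightarrow> bool list \<Rightarrow> complex"

definition unit_vec :: "nat \<Rightarrow> qvec \<Rightarrow> bool" where
  "unit_vec n \<phi> \<longleftrightarrow> (\<Sum>xs\<in>bitstrings n. (cmod (\<phi> xs))\<^sup>2) = 1"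

definition proj :: "qvec \<Rightarrow> qop" where
  "proj \<phi> = (\<lambda>xs ys. \<phi> xs * cnj (\<phi> ys))"

definition op_tensor :: "nat \<Rightarrow> qop \<Rightarrow> qop \<Rightarrow> qop" where
  "op_tensor n1 A B = (\<lambda>xs ys. A (take n1 xs) (take n1 ys) * B (drop n1 xs) (drop n1 ys))"

definition tensor_pow :: "(bool \<Rightarrow> bool \<Rightarrow> complex) \<Rightarrow> nat \<Rightarrow> qop" where
  "tensor_pow A n = (\<lambda>xs ys. \<Prod>i<n. A (xs ! i) (ys ! i))"

definition op_mult :: "nat \<Rightarrow> qop \<Rightarrow> qop \<Rightarrow> qop" where
  "op_mult n A B = (\<lambda>xs zs. \<Sum>ys\<in>bitstrings n. A xs ys * B ys zs)"

definition op_trace :: "nat \<Rightarrow> qop \<Rightarrow> complex" where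
  "op_trace n A = (\<Sum>xs\<in>bitstrings n. A xs xs)"

definition op_add :: "qop \<Rightarrow> qop \<Rightarrow> qop" where
  "op_add A B = (\<lambda>xs ys. A xs ys + B xs ys)"

definition op_scale :: "complex \<Rightarrow> qop \<Rightarrow> qop" where
  "op_scale c A = (\<lambda>xs ys. c * A xs ys)"

definition ket0bra0 :: "bool \<Rightarrow> bool \<Rightarrow> complex" where
  "ket0bra0 a b = (if \<not> a \<and> \<not> b then 1 else 0)"
definition ket1bra1 :: "bool \<Rightarrow> bool \<Rightarrow> complex" where
  "ket1bra1 a b = (if a \<and> b then 1 else 0)"
definition sigma_x :: "bool \<Rightarrow> bool \<Rightarrow> complex" where
  "sigma_x a b = (if a \<noteq> b then 1 else 0)"

definition MZ :: "nat \<Rightarrow> qop" where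
  "MZ n = op_add (tensor_pow ket0bra0 n) (tensor_pow ket1bra1 n)"

definition MX :: "nat \<Rightarrow> qop" where
  "MX n = tensor_pow sigma_x n"

text \<open>f_{n1}{n2}: the maximum (taken as supremum; the value is real since the operator is
 Hermitian) over unit product states.\<close>
definition f_val :: "real \<Rightarrow> nat \<Rightarrow> nat \<Rightarrow> real" where
  "f_val \<alpha> n1 n2 = Sup {Re (op_trace (n1 + n2)
       (op_mult (n1 + n2) (op_add (op_scale (complex_of_real \<alpha>) (MZ (n1 + n2))) (MX (n1 + n2)))
          (op_tensor n1 (proj \<phi>a) (proj \<phi>b)))) |
      \<phi>a \<phi>b. unit_vec n1 \<phi>a \<and> unit_vec n2 \<phi>b}"

end

theory Submission
  imports Defs
begin

text \<open>Only the diagonal entries of \<open>M\<^sub>Z\<close> at the two constant strings and the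
  anti-diagonal of \<open>M\<^sub>X\<close> contribute, so the energy of a product state \<open>\<phi>\<^sub>a \<otimes> \<phi>\<^sub>b\<close> is
  \<open>\<alpha> (p\<^sub>0(a) p\<^sub>0(b) + p\<^sub>1(a) p\<^sub>1(b)) + X(a) X(b)\<close>, where \<open>p\<^sub>c\<close> is the weight on the
  constant string \<open>cc\<dots>c\<close> and \<open>X\<close> the (real) expectation of \<open>\<sigma>\<^sub>x\<close> on every qubit.
  A one-qubit \<open>\<phi>\<^sub>b\<close> embeds into \<open>n\<^sub>2\<close> qubits on the two constant strings without changing
  these data. Conversely, pairing every other string with its complement and using AM-GM gives
  \<open>|X(b)| \<le> 2 r\<^sub>0 r\<^sub>1 + q\<close>, with \<open>r\<^sub>c\<^sup>2 = p\<^sub>c(b)\<close> and \<open>q = 1 - r\<^sub>0\<^sup>2 - r\<^sub>1\<^sup>2\<close>; the qubit with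
  weights \<open>r\<^sub>0\<^sup>2 + q/2\<close>, \<open>r\<^sub>1\<^sup>2 + q/2\<close> and a relative sign matching \<open>X(a)\<close> has larger
  \<open>p\<^sub>0\<close>, \<open>p\<^sub>1\<close> and \<open>|X|\<close>, so it does at least as well. Hence the two sets of energies are
  cofinal in each other and have the same supremum.\<close>

lemma finite_bitstrings [simp]: "finite (bitstrings n)"
proof -
  have "bitstrings n = {xs. set xs \<subseteq> (UNIV::bool set) \<and> length xs = n}"
    by (auto simp: bitstrings_def)
  thus ?thesis using finite_lists_length_eq[of "UNIV::bool set" n] by simp
qed

lemma mem_bitstrings [simp]: "xs \<in> bitstrings n \<longleftrightarrow> length xs = n"
  by (simp add: bitstrings_def)

lemma bitstrings_Suc_0: "bitstrings (Suc 0) = {[False], [True]}"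
proof -
  have "length xs = Suc 0 \<longleftrightarrow> xs = [False] \<or> xs = [True]" for xs :: "bool list"
    by (cases xs) auto
  thus ?thesis by (auto simp: bitstrings_def)
qed

lemma bitstrings_add: "bitstrings (n1 + n2) = (\<lambda>(u, v). u @ v) ` (bitstrings n1 \<times> bitstrings n2)"
proof
  show "bitstrings (n1 + n2) \<subseteq> (\<lambda>(u, v). u @ v) ` (bitstrings n1 \<times> bitstrings n2)"
  proof
    fix xs assume "xs \<in> bitstrings (n1 + n2)"
    hence "xs = (\<lambda>(u, v). u @ v) (take n1 xs, drop n1 xs)"
      "(take n1 xs, drop n1 xs) \<in> bitstrings n1 \<times> bitstrings n2"
      by auto
    thus "xs \<in> (\<lambda>(u, v). u @ v) ` (bitstrings n1 \<times> bitstrings n2)" by blast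
  qed
qed auto

lemma sum_bitstrings_add_product:
  "(\<Sum>xs\<in>bitstrings (n1 + n2). g (take n1 xs) * h (drop n1 xs)) =
   (\<Sum>u\<in>bitstrings n1. g u) * (\<Sum>v\<in>bitstrings n2. h v :: 'a :: comm_semiring_0)"
proof -
  have inj: "inj_on (\<lambda>(u, v). u @ v) (bitstrings n1 \<times> bitstrings n2)"
    by (auto simp: inj_on_def)
  have "(\<Sum>xs\<in>bitstrings (n1 + n2). g (take n1 xs) * h (drop n1 xs)) =
        (\<Sum>p\<in>bitstrings n1 \<times> bitstrings n2.
           g (take n1 ((\<lambda>(u, v). u @ v) p)) * h (drop n1 ((\<lambda>(u, v). u @ v) p)))"
    unfolding bitstrings_add by (rule sum.reindex[OF inj, unfolded comp_def])
  also have "\<dots> = (\<Sum>p\<in>bitstrings n1 \<times> bitstrings n2. g (fst p) * h (snd p))"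
    by (rule sum.cong) auto
  also have "\<dots> = (\<Sum>u\<in>bitstrings n1. g u) * (\<Sum>v\<in>bitstrings n2. h v)"
    by (simp add: sum_product sum.cartesian_product case_prod_beta)
  finally show ?thesis .
qed

lemma sum_bitstrings_map_Not: "(\<Sum>xs\<in>bitstrings n. f (map Not xs)) = (\<Sum>xs\<in>bitstrings n. f xs)"
  by (rule sum.reindex_bij_witness[of _ "map Not" "map Not"]) (auto simp: comp_def)

lemma sum_bitstrings_remove2:
  assumes "z0 \<in> bitstrings n" "z1 \<in> bitstrings n" "z0 \<noteq> z1"
  shows "(\<Sum>xs\<in>bitstrings n. f xs) = f z0 + f z1 + (\<Sum>xs\<in>bitstrings n - {z0, z1}. f xs)"
proof -
  have "(\<Sum>xs\<in>bitstrings n. f xs) = f z0 + (\<Sum>xs\<in>bitstrings n - {z0}. f xs)"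
    using assms by (simp add: sum.remove)
  also have "(\<Sum>xs\<in>bitstrings n - {z0}. f xs) = f z1 + (\<Sum>xs\<in>bitstrings n - {z0} - {z1}. f xs)"
    using assms by (simp add: sum.remove)
  also have "bitstrings n - {z0} - {z1} = bitstrings n - {z0, z1}" by auto
  finally show ?thesis by (simp add: add.assoc)
qed

lemma replicate_False_neq_True: "1 \<le> n \<Longrightarrow> replicate n False \<noteq> replicate n True"
  by (cases n) auto

lemma tensor_pow_indicator:
  assumes "length xs = n" "length ys = n"
  shows "tensor_pow (\<lambda>a b. if P a b then 1 else 0) n xs ys =
         (if \<forall>i<n. P (xs ! i) (ys ! i) then 1 else 0)"
proof (cases "\<forall>i<n. P (xs ! i) (ys ! i)")
  case False
  then obtain i where "i < n" "\<not> P (xs ! i) (ys ! i)" by auto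
  thus ?thesis using False by (auto simp: tensor_pow_def intro!: prod_zero)
qed (simp add: tensor_pow_def)

lemma tensor_pow_ket0bra0:
  assumes "length xs = n" "length ys = n"
  shows "tensor_pow ket0bra0 n xs ys =
         (if xs = replicate n False \<and> ys = replicate n False then 1 else 0)"
proof -
  have "ket0bra0 = (\<lambda>a b. if \<not> a \<and> \<not> b then 1 else 0)" by (auto simp: ket0bra0_def fun_eq_iff)
  thus ?thesis using tensor_pow_indicator[OF assms, of "\<lambda>a b. \<not> a \<and> \<not> b"] assms
    by (auto simp: list_eq_iff_nth_eq)
qed

lemma tensor_pow_ket1bra1:
  assumes "length xs = n" "length ys = n"
  shows "tensor_pow ket1bra1 n xs ys =
         (if xs = replicate n True \<and> ys = replicate n True then 1 else 0)"
proof -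
  have "ket1bra1 = (\<lambda>a b. if a \<and> b then 1 else 0)" by (auto simp: ket1bra1_def fun_eq_iff)
  thus ?thesis using tensor_pow_indicator[OF assms, of "\<lambda>a b. a \<and> b"] assms
    by (auto simp: list_eq_iff_nth_eq)
qed

lemma tensor_pow_sigma_x:
  assumes "length xs = n" "length ys = n"
  shows "tensor_pow sigma_x n xs ys = (if ys = map Not xs then 1 else 0)"
proof -
  have "sigma_x = (\<lambda>a b. if a \<noteq> b then 1 else 0)" by (auto simp: sigma_x_def fun_eq_iff)
  thus ?thesis using tensor_pow_indicator[OF assms, of "\<lambda>a b. a \<noteq> b"] assms
    by (auto simp: list_eq_iff_nth_eq)
qed

lemma op_trace_mult_point_projector:
  assumes "\<And>xs ys. length xs = n \<Longrightarrow> length ys = n \<Longrightarrow> A xs ys = (if xs = z \<and> ys = z then 1 else 0)"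
    and "length z = n"
  shows "op_trace n (op_mult n A \<rho>) = \<rho> z z"
proof -
  have "(\<Sum>ys\<in>bitstrings n. A xs ys * \<rho> ys xs) = (if xs = z then \<rho> z z else 0)"
    if "length xs = n" for xs
  proof -
    have "(\<Sum>ys\<in>bitstrings n. A xs ys * \<rho> ys xs) =
          (\<Sum>ys\<in>bitstrings n. if ys = z then (if xs = z then \<rho> z z else 0) else 0)"
      by (rule sum.cong[OF refl]) (use that assms(1) in auto)
    thus ?thesis using assms(2) by simp
  qed
  hence "op_trace n (op_mult n A \<rho>) = (\<Sum>xs\<in>bitstrings n. if xs = z then \<rho> z z else 0)"
    unfolding op_trace_def op_mult_def by (intro sum.cong) auto
  thus ?thesis using assms(2) by simp
qed

lemma op_trace_mult_MX: "op_trace n (op_mult n (MX n) \<rho>) = (\<Sum>xs\<in>bitstrings n. \<rho> (map Not xs) xs)"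
  unfolding op_trace_def op_mult_def MX_def
proof (rule sum.cong[OF refl])
  fix xs assume xs: "xs \<in> bitstrings n"
  have "(\<Sum>ys\<in>bitstrings n. tensor_pow sigma_x n xs ys * \<rho> ys xs) =
        (\<Sum>ys\<in>bitstrings n. if ys = map Not xs then \<rho> (map Not xs) xs else 0)"
    by (rule sum.cong[OF refl]) (use xs tensor_pow_sigma_x in auto)
  thus "(\<Sum>ys\<in>bitstrings n. tensor_pow sigma_x n xs ys * \<rho> ys xs) = \<rho> (map Not xs) xs"
    using xs by simp
qed

lemma op_trace_mult_hamiltonian:
  "op_trace n (op_mult n (op_add (op_scale c (MZ n)) (MX n)) \<rho>) =
   c * (\<rho> (replicate n False) (replicate n False) + \<rho> (replicate n True) (replicate n True))
   + (\<Sum>xs\<in>bitstrings n. \<rho> (map Not xs) xs)"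
proof -
  have "op_trace n (op_mult n (op_add (op_scale c (MZ n)) (MX n)) \<rho>) =
        c * (op_trace n (op_mult n (tensor_pow ket0bra0 n) \<rho>)
             + op_trace n (op_mult n (tensor_pow ket1bra1 n) \<rho>))
        + op_trace n (op_mult n (MX n) \<rho>)"
    unfolding op_trace_def op_mult_def op_add_def op_scale_def MZ_def
    by (simp add: algebra_simps sum.distrib sum_distrib_left)
  also have "\<dots> = c * (\<rho> (replicate n False) (replicate n False)
                       + \<rho> (replicate n True) (replicate n True))
                  + (\<Sum>xs\<in>bitstrings n. \<rho> (map Not xs) xs)"
    by (subst (1 2) op_trace_mult_point_projector)
       (auto simp: tensor_pow_ket0bra0 tensor_pow_ket1bra1 op_trace_mult_MX)
  finally show ?thesis .
qed

definition sigma_x_expect :: "nat \<Rightarrow> qvec \<Rightarrow> complex" where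
  "sigma_x_expect n \<phi> = (\<Sum>xs\<in>bitstrings n. \<phi> (map Not xs) * cnj (\<phi> xs))"

definition const_weight :: "nat \<Rightarrow> bool \<Rightarrow> qvec \<Rightarrow> real" where
  "const_weight n c \<phi> = (cmod (\<phi> (replicate n c)))\<^sup>2"

definition product_energy :: "real \<Rightarrow> nat \<Rightarrow> nat \<Rightarrow> qvec \<Rightarrow> qvec \<Rightarrow> real" where
  "product_energy \<alpha> n1 n2 a b =
     \<alpha> * (const_weight n1 False a * const_weight n2 False b
          + const_weight n1 True a * const_weight n2 True b)
     + Re (sigma_x_expect n1 a) * Re (sigma_x_expect n2 b)"

lemma cnj_sigma_x_expect: "cnj (sigma_x_expect n \<phi>) = sigma_x_expect n \<phi>"
proof -
  have "cnj (sigma_x_expect n \<phi>) = (\<Sum>xs\<in>bitstrings n. cnj (\<phi> (map Not xs)) * \<phi> xs)"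
    by (simp add: sigma_x_expect_def)
  also have "\<dots> = (\<Sum>xs\<in>bitstrings n. cnj (\<phi> (map Not (map Not xs))) * \<phi> (map Not xs))"
    by (rule sum_bitstrings_map_Not[symmetric])
  also have "\<dots> = sigma_x_expect n \<phi>" by (simp add: sigma_x_expect_def comp_def mult.commute)
  finally show ?thesis .
qed

lemma Im_sigma_x_expect: "Im (sigma_x_expect n \<phi>) = 0"
  using cnj_sigma_x_expect by (metis Reals_cnj_iff complex_is_Real_iff)

lemma energy_product_state:
  "Re (op_trace (n1 + n2)
       (op_mult (n1 + n2) (op_add (op_scale (complex_of_real \<alpha>) (MZ (n1 + n2))) (MX (n1 + n2)))
          (op_tensor n1 (proj a) (proj b)))) = product_energy \<alpha> n1 n2 a b"
proof -
  let ?\<rho> = "op_tensor n1 (proj a) (proj b)"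
  have proj_diag: "proj \<phi> u u = complex_of_real ((cmod (\<phi> u))\<^sup>2)" for \<phi> u
    by (simp add: proj_def complex_norm_square[symmetric])
  have "(\<Sum>xs\<in>bitstrings (n1 + n2). ?\<rho> (map Not xs) xs) =
        (\<Sum>xs\<in>bitstrings (n1 + n2). (\<lambda>u. a (map Not u) * cnj (a u)) (take n1 xs)
                                      * (\<lambda>v. b (map Not v) * cnj (b v)) (drop n1 xs))"
    by (rule sum.cong[OF refl]) (simp add: op_tensor_def proj_def take_map drop_map)
  also have "\<dots> = sigma_x_expect n1 a * sigma_x_expect n2 b"
    unfolding sigma_x_expect_def by (rule sum_bitstrings_add_product)
  finally show ?thesis
    by (simp add: op_trace_mult_hamiltonian op_tensor_def proj_diag const_weight_def
                  product_energy_def Im_sigma_x_expect)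
qed

lemma product_energy_qubit_embedding:
  assumes "1 \<le> n2" and "unit_vec 1 b"
  shows "\<exists>b'. unit_vec n2 b' \<and> product_energy \<alpha> n1 n2 a b' = product_energy \<alpha> n1 1 a b"
proof -
  let ?z0 = "replicate n2 False" and ?z1 = "replicate n2 True"
  define b' where "b' xs = (if xs = ?z0 then b [False] else if xs = ?z1 then b [True] else 0)" for xs
  have ne: "?z0 \<noteq> ?z1" using replicate_False_neq_True[OF assms(1)] .
  have rest: "b' xs = 0" if "xs \<in> bitstrings n2 - {?z0, ?z1}" for xs
    using that by (auto simp: b'_def)
  have "(\<Sum>xs\<in>bitstrings n2. (cmod (b' xs))\<^sup>2) = (cmod (b [False]))\<^sup>2 + (cmod (b [True]))\<^sup>2"
    using ne by (subst sum_bitstrings_remove2[of ?z0 n2 ?z1]) (auto simp: rest b'_def)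
  hence unit: "unit_vec n2 b'" using assms(2) by (simp add: unit_vec_def bitstrings_Suc_0)
  have "sigma_x_expect n2 b' = b [True] * cnj (b [False]) + b [False] * cnj (b [True])"
    unfolding sigma_x_expect_def using ne
    by (subst sum_bitstrings_remove2[of ?z0 n2 ?z1]) (auto simp: rest b'_def)
  hence "sigma_x_expect n2 b' = sigma_x_expect 1 b"
    by (simp add: sigma_x_expect_def bitstrings_Suc_0)
  moreover have "const_weight n2 c b' = const_weight 1 c b" for c
    using ne by (cases c) (auto simp: const_weight_def b'_def)
  ultimately show ?thesis using unit by (auto simp: product_energy_def)
qed

lemma sigma_x_expect_bound:
  assumes "1 \<le> n" and "unit_vec n b"
  defines "r0 \<equiv> cmod (b (replicate n False))" and "r1 \<equiv> cmod (b (replicate n True))"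
  shows "\<bar>Re (sigma_x_expect n b)\<bar> \<le> 2 * r0 * r1 + (1 - r0\<^sup>2 - r1\<^sup>2)"
    and "0 \<le> 1 - r0\<^sup>2 - r1\<^sup>2"
proof -
  let ?R = "bitstrings n - {replicate n False, replicate n True}"
  define r where "r xs = cmod (b xs)" for xs
  have split: "(\<Sum>xs\<in>bitstrings n. f xs) =
               f (replicate n False) + f (replicate n True) + (\<Sum>xs\<in>?R. f xs)" for f :: "_ \<Rightarrow> real"
    using replicate_False_neq_True[OF assms(1)] by (intro sum_bitstrings_remove2) auto
  have norm: "(\<Sum>xs\<in>bitstrings n. (r xs)\<^sup>2) = 1"
    using assms(2) by (simp add: unit_vec_def r_def)
  have rest: "(\<Sum>xs\<in>?R. (r xs)\<^sup>2) = 1 - r0\<^sup>2 - r1\<^sup>2"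
    using norm split[of "\<lambda>xs. (r xs)\<^sup>2"] by (simp add: r_def r0_def r1_def)
  have rest_flip: "(\<Sum>xs\<in>?R. (r (map Not xs))\<^sup>2) = 1 - r0\<^sup>2 - r1\<^sup>2"
    using norm sum_bitstrings_map_Not[of "\<lambda>xs. (r xs)\<^sup>2"] split[of "\<lambda>xs. (r (map Not xs))\<^sup>2"]
    by (simp add: r_def r0_def r1_def)
  show "0 \<le> 1 - r0\<^sup>2 - r1\<^sup>2" using rest[symmetric] by (simp add: sum_nonneg)
  have "\<bar>Re (sigma_x_expect n b)\<bar> \<le> cmod (sigma_x_expect n b)" by (rule abs_Re_le_cmod)
  also have "\<dots> \<le> (\<Sum>xs\<in>bitstrings n. cmod (b (map Not xs) * cnj (b xs)))"
    unfolding sigma_x_expect_def by (rule norm_sum)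
  also have "\<dots> = (\<Sum>xs\<in>bitstrings n. r (map Not xs) * r xs)" by (simp add: r_def norm_mult)
  also have "\<dots> = r1 * r0 + r0 * r1 + (\<Sum>xs\<in>?R. r (map Not xs) * r xs)"
    by (subst split) (simp add: r_def r0_def r1_def)
  also have "(\<Sum>xs\<in>?R. r (map Not xs) * r xs) \<le> (\<Sum>xs\<in>?R. ((r (map Not xs))\<^sup>2 + (r xs)\<^sup>2) / 2)"
  proof (rule sum_mono)
    fix xs
    have "0 \<le> (r (map Not xs) - r xs)\<^sup>2" by simp
    thus "r (map Not xs) * r xs \<le> ((r (map Not xs))\<^sup>2 + (r xs)\<^sup>2) / 2"
      by (simp add: power2_eq_square algebra_simps)
  qed
  also have "(\<Sum>xs\<in>?R. ((r (map Not xs))\<^sup>2 + (r xs)\<^sup>2) / 2) = 1 - r0\<^sup>2 - r1\<^sup>2"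
    using rest rest_flip by (simp add: sum_divide_distrib[symmetric] sum.distrib)
  finally show "\<bar>Re (sigma_x_expect n b)\<bar> \<le> 2 * r0 * r1 + (1 - r0\<^sup>2 - r1\<^sup>2)" by simp
qed

lemma product_energy_le_qubit:
  assumes "1 \<le> n2" and "unit_vec n2 b" and "0 \<le> \<alpha>"
  shows "\<exists>\<psi>. unit_vec 1 \<psi> \<and> product_energy \<alpha> n1 n2 a b \<le> product_energy \<alpha> n1 1 a \<psi>"
proof -
  define r0 where "r0 = cmod (b (replicate n2 False))"
  define r1 where "r1 = cmod (b (replicate n2 True))"
  define q where "q = 1 - r0\<^sup>2 - r1\<^sup>2"
  define c0 where "c0 = r0\<^sup>2 + q / 2"
  define c1 where "c1 = r1\<^sup>2 + q / 2"
  define s :: real where "s = (if 0 \<le> Re (sigma_x_expect n1 a) then 1 else -1)"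
  define \<psi> where "\<psi> xs = (if xs = [False] then complex_of_real (sqrt c0)
      else if xs = [True] then complex_of_real (s * sqrt c1) else 0)" for xs
  have X_bound: "\<bar>Re (sigma_x_expect n2 b)\<bar> \<le> 2 * r0 * r1 + q" and "0 \<le> q"
    using sigma_x_expect_bound[OF assms(1,2)] by (simp_all add: r0_def r1_def q_def)
  hence "0 \<le> c0" "0 \<le> c1" by (simp_all add: c0_def c1_def)
  have "\<bar>s\<bar> = 1" by (simp add: s_def)
  have weights_\<psi>: "const_weight 1 False \<psi> = c0" "const_weight 1 True \<psi> = c1"
    using \<open>0 \<le> c0\<close> \<open>0 \<le> c1\<close> \<open>\<bar>s\<bar> = 1\<close>
    by (simp_all add: const_weight_def \<psi>_def abs_mult norm_mult)
  have unit: "unit_vec 1 \<psi>"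
    using weights_\<psi> by (simp add: unit_vec_def bitstrings_Suc_0 const_weight_def c0_def c1_def q_def)
  have X_\<psi>: "Re (sigma_x_expect 1 \<psi>) = 2 * s * (sqrt c0 * sqrt c1)"
    by (simp add: sigma_x_expect_def bitstrings_Suc_0 \<psi>_def)
  have "4 * c0 * c1 - (2 * r0 * r1 + q)\<^sup>2 = 2 * q * (r0 - r1)\<^sup>2"
    by (simp add: c0_def c1_def power2_eq_square algebra_simps)
  moreover have "0 \<le> 2 * q * (r0 - r1)\<^sup>2" using \<open>0 \<le> q\<close> by simp
  ultimately have "(2 * r0 * r1 + q)\<^sup>2 \<le> 4 * c0 * c1" by linarith
  hence "2 * r0 * r1 + q \<le> sqrt (4 * c0 * c1)" by (rule real_le_rsqrt)
  also have "sqrt (4 * c0 * c1) = 2 * (sqrt c0 * sqrt c1)" by (simp add: real_sqrt_mult)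
  finally have "\<bar>Re (sigma_x_expect n2 b)\<bar> \<le> 2 * (sqrt c0 * sqrt c1)" using X_bound by linarith
  hence "\<bar>Re (sigma_x_expect n1 a)\<bar> * \<bar>Re (sigma_x_expect n2 b)\<bar>
         \<le> \<bar>Re (sigma_x_expect n1 a)\<bar> * (2 * (sqrt c0 * sqrt c1))"
    by (simp add: mult_left_mono)
  hence "Re (sigma_x_expect n1 a) * Re (sigma_x_expect n2 b)
         \<le> \<bar>Re (sigma_x_expect n1 a)\<bar> * (2 * (sqrt c0 * sqrt c1))"
    by (metis abs_ge_self abs_mult order_trans)
  also have "\<dots> = Re (sigma_x_expect n1 a) * Re (sigma_x_expect 1 \<psi>)"
    unfolding X_\<psi> by (simp add: s_def)
  finally have X_le: "Re (sigma_x_expect n1 a) * Re (sigma_x_expect n2 b)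
                      \<le> Re (sigma_x_expect n1 a) * Re (sigma_x_expect 1 \<psi>)" .
  have "const_weight n1 False a * r0\<^sup>2 + const_weight n1 True a * r1\<^sup>2
        \<le> const_weight n1 False a * c0 + const_weight n1 True a * c1"
    using \<open>0 \<le> q\<close> by (intro add_mono mult_left_mono) (auto simp: c0_def c1_def const_weight_def)
  hence "\<alpha> * (const_weight n1 False a * r0\<^sup>2 + const_weight n1 True a * r1\<^sup>2)
         \<le> \<alpha> * (const_weight n1 False a * c0 + const_weight n1 True a * c1)"
    using assms(3) by (rule mult_left_mono)
  hence "product_energy \<alpha> n1 n2 a b \<le> product_energy \<alpha> n1 1 a \<psi>"
    using X_le unfolding product_energy_def weights_\<psi>
    by (simp add: const_weight_def r0_def r1_def)
  thus ?thesis using unit by blast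
qed

text \<open>No boundedness is needed: \<open>Sup_real_def\<close> depends only on the set of upper bounds.\<close>

lemma Sup_real_eq_cofinal_subset:
  fixes A B :: "real set"
  assumes "B \<subseteq> A" and "\<And>x. x \<in> A \<Longrightarrow> \<exists>y\<in>B. x \<le> y"
  shows "Sup A = Sup B"
proof -
  have "(\<lambda>z. \<forall>x\<in>A. x \<le> z) = (\<lambda>z. \<forall>x\<in>B. x \<le> z)"
    using assms by (fastforce intro!: ext)
  thus ?thesis unfolding Sup_real_def by simp
qed

theorem lemma1:
  fixes \<alpha> :: real and n1 n2 :: nat
  assumes "0 < \<alpha>" and "\<alpha> \<le> 2" and "1 \<le> n1" and "1 \<le> n2"
  shows "f_val \<alpha> n1 n2 = f_val \<alpha> n1 1"
proof -
  let ?S = "\<lambda>k. {product_energy \<alpha> n1 k \<phi>a \<phi>b | \<phi>a \<phi>b. unit_vec n1 \<phi>a \<and> unit_vec k \<phi>b}"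
  have f_val_eq: "f_val \<alpha> n1 k = Sup (?S k)" for k
    unfolding f_val_def energy_product_state ..
  have "?S 1 \<subseteq> ?S n2"
  proof
    fix x assume "x \<in> ?S 1"
    then obtain a b where x: "x = product_energy \<alpha> n1 1 a b" "unit_vec n1 a" "unit_vec 1 b"
      by blast
    then obtain b' where "unit_vec n2 b'" "product_energy \<alpha> n1 n2 a b' = x"
      using product_energy_qubit_embedding[OF assms(4)] by metis
    thus "x \<in> ?S n2" using x(2) by blast
  qed
  moreover have "\<exists>y\<in>?S 1. x \<le> y" if "x \<in> ?S n2" for x
  proof -
    obtain a b where x: "x = product_energy \<alpha> n1 n2 a b" "unit_vec n1 a" "unit_vec n2 b"
      using \<open>x \<in> ?S n2\<close> by blast
    then obtain \<psi> where "unit_vec 1 \<psi>" "x \<le> product_energy \<alpha> n1 1 a \<psi>"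
      using product_energy_le_qubit[OF assms(4) _ less_imp_le[OF assms(1)]] by metis
    thus ?thesis using x(2) by blast
  qed
  ultimately show ?thesis
    unfolding f_val_eq by (rule Sup_real_eq_cofinal_subset)
qed

end
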